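(* Let $\mathcal{X},\mathcal{Y},\mathcal{Z}$ be sets, $\mathcal{G}=\{g_1,\dots,g_K\}$ a finite set of maps $\mathcal{X}\to\mathcal{Z}$, and $\mathcal{H}$ a set of maps $\mathcal{Z}\to\mathbb{R}$. Fix arbitrary datasets $\mathcal{S}_t=((x_{t,1},y_{t,1}),\dots,(x_{t,m},y_{t,m}))$, $t=1,\dots,T$, all of size $m$. Assume that for every $t$ and every $g\in\mathcal{G}$, $\hat L_t(g)\in[0,C]$ and $\mathcal{R}_t(g)\le\beta(g,m)$. Run EWA-LL with $\pi_1$ uniform on $\mathcal{G}$ and $\eta=\frac{2}{C}\sqrt{\frac{2\log K}{T}}$. Then $$\frac{1}{T}\sum_{t=1}^T\mathbb{E}_{\hat g_t\sim\pi_t}\Big[\frac{1}{m}\sum_{i=1}^m\hat\ell_{t,i}\Big]\le\min_{1\le k\le K}\Bigg\{\frac{1}{T}\sum_{t=1}^T\inf_{h_t\in\mathcal{H}}\frac{1}{m}\sum_{i=1}^m\ell\big(h_t\circ g_k(x_{t,i}),y_{t,i}\big)+\beta(g_k,m)\Bigg\}+C\sqrt{\frac{\log K}{2T}}.$$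
   Context: Within-task algorithm: for each task $t$ and each $g\in\mathcal{G}$, an online algorithm processes $\mathcal{S}_t$ sequentially, producing at step $i$ a prediction $\hat y^g_{t,i}$ depending only on $g$, $x_{t,1},\dots,x_{t,i}$, $y_{t,1},\dots,y_{t,i-1}$. Let $\hat L_t(g)=\frac{1}{m}\sum_{i=1}^m\ell(\hat y^g_{t,i},y_{t,i})$ and $\mathcal{R}_t(g)=\hat L_t(g)-\inf_{h\in\mathcal{H}}\frac1m\sum_{i=1}^m\ell(h\circ g(x_{t,i}),y_{t,i})$. EWA-LL: given a prior $\pi_1$ on $\mathcal{G}$ and $\eta>0$, for $t=1,\dots,T$: draw $\hat g_t\sim\pi_t$; run the within-task algorithm on $\mathcal{S}_t$ with $\hat g_t$, incurring losses $\hat\ell_{t,i}=\ell(\hat y^{\hat g_t}_{t,i},y_{t,i})$; update $\pi_{t+1}(g_k)=\exp(-\eta\hat L_t(g_k))\pi_t(g_k)/\sum_{j=1}^K\exp(-\eta\hat L_t(g_j))\pi_t(g_j)$. $\mathbb{E}_{\hat g_t\sim\pi_t}$ is over the random draw of $\hat g_t$. *)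

theory Defs
  imports Complex_Main
begin

text \<open>Within-task algorithm: A g hist x gives the prediction for input x, given the
  representation g and the history hist of previously revealed pairs of the current task.
  Tasks t = 1..T, examples i = 1..m; data point i of task t is (xs t i, ys t i).\<close>

definition hist :: "(nat \<Rightarrow> nat \<Rightarrow> 'x) \<Rightarrow> (nat \<Rightarrow> nat \<Rightarrow> 'y) \<Rightarrow> nat \<Rightarrow> nat \<Rightarrow> ('x \<times> 'y) list" where
  "hist xs ys t i = map (\<lambda>j. (xs t j, ys t j)) [1..<i]"

definition pred :: "(('x \<Rightarrow> 'z) \<Rightarrow> ('x \<times> 'y) list \<Rightarrow> 'x \<Rightarrow> real)
    \<Rightarrow> (nat \<Rightarrow> nat \<Rightarrow> 'x) \<Rightarrow> (nat \<Rightarrow> nat \<Rightarrow> 'y) \<Rightarrow> nat \<Rightarrow> ('x \<Rightarrow> 'z) \<Rightarrow> nat \<Rightarrow> real" where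
  "pred A xs ys t g i = A g (hist xs ys t i) (xs t i)"

definition Lhat :: "(real \<Rightarrow> 'y \<Rightarrow> real) \<Rightarrow> (('x \<Rightarrow> 'z) \<Rightarrow> ('x \<times> 'y) list \<Rightarrow> 'x \<Rightarrow> real)
    \<Rightarrow> (nat \<Rightarrow> nat \<Rightarrow> 'x) \<Rightarrow> (nat \<Rightarrow> nat \<Rightarrow> 'y) \<Rightarrow> nat \<Rightarrow> nat \<Rightarrow> ('x \<Rightarrow> 'z) \<Rightarrow> real" where
  "Lhat loss A xs ys m t g = (1 / real m) * (\<Sum>i=1..m. loss (pred A xs ys t g i) (ys t i))"

definition emp :: "(real \<Rightarrow> 'y \<Rightarrow> real) \<Rightarrow> (nat \<Rightarrow> nat \<Rightarrow> 'x) \<Rightarrow> (nat \<Rightarrow> nat \<Rightarrow> 'y) \<Rightarrow> nat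
    \<Rightarrow> nat \<Rightarrow> ('x \<Rightarrow> 'z) \<Rightarrow> ('z \<Rightarrow> real) \<Rightarrow> real" where
  "emp loss xs ys m t g h = (1 / real m) * (\<Sum>i=1..m. loss ((h \<circ> g) (xs t i)) (ys t i))"

definition best :: "(real \<Rightarrow> 'y \<Rightarrow> real) \<Rightarrow> ('z \<Rightarrow> real) set \<Rightarrow> (nat \<Rightarrow> nat \<Rightarrow> 'x) \<Rightarrow> (nat \<Rightarrow> nat \<Rightarrow> 'y)
    \<Rightarrow> nat \<Rightarrow> nat \<Rightarrow> ('x \<Rightarrow> 'z) \<Rightarrow> real" where
  "best loss H xs ys m t g = (INF h\<in>H. emp loss xs ys m t g h)"

definition regret where
  "regret loss A H xs ys m t g = Lhat loss A xs ys m t g - best loss H xs ys m t g"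

text \<open>EWA-LL weights over indices k = 1..K.  Given L t k = \<open>\<hat>L_t(g_k)\<close>,
  ewa L K eta t k is \<pi>_t(g_k) for t \<ge> 1 (\<pi>_1 uniform); the value at t = 0 is irrelevant.\<close>
fun ewa :: "(nat \<Rightarrow> nat \<Rightarrow> real) \<Rightarrow> nat \<Rightarrow> real \<Rightarrow> nat \<Rightarrow> nat \<Rightarrow> real" where
  "ewa L K eta 0 k = 1 / real K"
| "ewa L K eta (Suc t) k =
     (if t = 0 then 1 / real K
      else exp (- eta * L t k) * ewa L K eta t k /
           (\<Sum>j=1..K. exp (- eta * L t j) * ewa L K eta t j))"

end

theory Submission imports Defs "HOL-Probability.Hoeffding" begin

text \<open>The EWA-LL weight of \<open>g\<^sub>k\<close> in task \<open>t\<close> is \<open>exp (-\<eta> S(t-1,k)) / W(t-1)\<close>, where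
  \<open>S(n,k)\<close> is the cumulative loss of \<open>g\<^sub>k\<close> over the first \<open>n\<close> tasks and
  \<open>W(n) = \<Sum>\<^sub>k exp (-\<eta> S(n,k))\<close>. Hoeffding's lemma for the distribution \<open>\<pi>\<^sub>t\<close> bounds
  \<open>ln W(t) - ln W(t-1)\<close> by \<open>-\<eta> E\<^sub>t + \<eta>\<^sup>2 C\<^sup>2/8\<close>, with \<open>E\<^sub>t\<close> the expected loss in task \<open>t\<close>.
  Telescoping, together with \<open>W(0) = K\<close> and \<open>W(T) \<ge> exp (-\<eta> S(T,k))\<close>, gives
  \<open>\<eta> \<Sum>\<^sub>t E\<^sub>t \<le> \<eta> S(T,k) + ln K + T \<eta>\<^sup>2 C\<^sup>2/8\<close> for every \<open>k\<close>, and the chosen \<open>\<eta>\<close> balances the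
  last two terms. The regret hypothesis then bounds \<open>S(T,k)\<close> by the comparator.\<close>

lemma exp_neg_le_chord:
  fixes l C x :: real
  assumes "l \<ge> 0" "C > 0" "0 \<le> x" "x \<le> C"
  shows "exp (- l * x) \<le> (1 - x / C) + (x / C) * exp (- l * C)"
proof -
  have "convex_on UNIV (\<lambda>x. exp (l * x))"
    by (rule convex_on_exp) (use assms in auto)
  then have "exp (l * ((1 - x/C) *\<^sub>R 0 + (x/C) *\<^sub>R (-C))) \<le> (1 - x/C) * exp (l * 0) + (x/C) * exp (l * (-C))"
    by (rule convex_onD) (use assms in auto)
  moreover have "(1 - x/C) *\<^sub>R 0 + (x/C) *\<^sub>R (-C) = - x"
    using assms by simp
  ultimately show ?thesis by simp
qed

lemma Hoeffdings_lemma_two_point: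
  fixes h p :: real
  assumes "h \<ge> 0" "0 \<le> p" "p \<le> 1"
  shows "1 - p + p * exp (- h) \<le> exp (- h * p + h\<^sup>2 / 8)"
proof -
  define q where "q = 1 - p"
  have q: "q \<ge> 0" using assms by (simp add: q_def)
  have pos: "1 + q * (exp h - 1) > 0"
    using q assms by (intro add_pos_nonneg mult_nonneg_nonneg) auto
  have "ln (1 + q * (exp h - 1)) \<le> h\<^sup>2 / 8 + h * q"
    using Hoeffdings_lemma_aux[OF assms(1) q] by simp
  then have "1 + q * (exp h - 1) \<le> exp (h\<^sup>2 / 8 + h * q)"
    using pos by (metis exp_le_cancel_iff exp_ln)
  then have "exp (- h) * (1 + q * (exp h - 1)) \<le> exp (- h) * exp (h\<^sup>2 / 8 + h * q)"
    by simp
  also have "\<dots> = exp (- h * p + h\<^sup>2 / 8)"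
    unfolding exp_add[symmetric] by (simp add: q_def algebra_simps)
  also have "exp (- h) * (1 + q * (exp h - 1)) = 1 - p + p * exp (- h)"
    by (simp add: q_def algebra_simps exp_minus_inverse)
  finally show ?thesis .
qed

lemma Hoeffdings_lemma_finite_weights:
  fixes w x :: "'a \<Rightarrow> real" and I :: "'a set" and l C :: real
  assumes "finite I" and w_nonneg: "\<And>k. k \<in> I \<Longrightarrow> w k \<ge> 0" and w_sum: "(\<Sum>k\<in>I. w k) = 1"
    and x: "\<And>k. k \<in> I \<Longrightarrow> 0 \<le> x k \<and> x k \<le> C" and C: "C > 0" and l: "l \<ge> 0"
  shows "(\<Sum>k\<in>I. w k * exp (- l * x k)) \<le> exp (- l * (\<Sum>k\<in>I. w k * x k) + l\<^sup>2 * C\<^sup>2 / 8)"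
proof -
  define p where "p = (\<Sum>k\<in>I. w k * x k) / C"
  have "0 \<le> (\<Sum>k\<in>I. w k * x k)"
    using w_nonneg x by (intro sum_nonneg) auto
  moreover have "(\<Sum>k\<in>I. w k * x k) \<le> (\<Sum>k\<in>I. w k * C)"
    using w_nonneg x by (intro sum_mono mult_left_mono) auto
  ultimately have p: "0 \<le> p" "p \<le> 1"
    using C w_sum by (auto simp: p_def sum_distrib_right[symmetric])
  have "(\<Sum>k\<in>I. w k * exp (- l * x k)) \<le> (\<Sum>k\<in>I. w k * ((1 - x k / C) + (x k / C) * exp (- l * C)))"
    using w_nonneg x exp_neg_le_chord[OF l C] by (intro sum_mono mult_left_mono) auto
  also have "\<dots> = 1 - p + p * exp (- (l * C))"
    using w_sum by (simp add: p_def algebra_simps sum_distrib_left sum_distrib_right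
        sum_subtractf sum_divide_distrib sum.distrib)
  also have "\<dots> \<le> exp (- (l * C) * p + (l * C)\<^sup>2 / 8)"
    using l C p by (intro Hoeffdings_lemma_two_point) auto
  also have "\<dots> = exp (- l * (\<Sum>k\<in>I. w k * x k) + l\<^sup>2 * C\<^sup>2 / 8)"
    using C by (simp add: p_def power_mult_distrib)
  finally show ?thesis .
qed

definition cum_loss :: "(nat \<Rightarrow> nat \<Rightarrow> real) \<Rightarrow> nat \<Rightarrow> nat \<Rightarrow> real" where
  "cum_loss L n k = (\<Sum>s=1..n. L s k)"

definition ewa_potential :: "(nat \<Rightarrow> nat \<Rightarrow> real) \<Rightarrow> nat \<Rightarrow> real \<Rightarrow> nat \<Rightarrow> real" where
  "ewa_potential L K eta n = (\<Sum>j=1..K. exp (- eta * cum_loss L n j))"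

lemma ewa_potential_pos: "K \<ge> 1 \<Longrightarrow> ewa_potential L K eta n > 0"
  unfolding ewa_potential_def by (intro sum_pos) auto

lemma ewa_potential_0: "ewa_potential L K eta 0 = real K"
  by (simp add: ewa_potential_def cum_loss_def)

lemma exp_cum_loss_step:
  assumes "t \<ge> 1"
  shows "exp (- eta * cum_loss L t j) = exp (- eta * L t j) * exp (- eta * cum_loss L (t - 1) j)"
proof -
  have "cum_loss L t j = cum_loss L (t - 1) j + L t j"
    using assms by (cases t) (auto simp: cum_loss_def)
  then show ?thesis by (simp add: distrib_left exp_add[symmetric])
qed

lemma ewa_potential_step:
  assumes "t \<ge> 1"
  shows "ewa_potential L K eta t
           = (\<Sum>j=1..K. exp (- eta * L t j) * exp (- eta * cum_loss L (t - 1) j))"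
  unfolding ewa_potential_def using exp_cum_loss_step[OF assms] by simp

lemma ewa_eq_exp_cum_loss:
  assumes K: "K \<ge> 1" and t: "t \<ge> 1"
  shows "ewa L K eta t k = exp (- eta * cum_loss L (t - 1) k) / ewa_potential L K eta (t - 1)"
  using t
proof (induction t arbitrary: k rule: dec_induct)
  case base
  show ?case by (simp add: cum_loss_def ewa_potential_def)
next
  case (step n)
  define W where "W = ewa_potential L K eta (n - 1)"
  have W: "W > 0" using ewa_potential_pos[OF K] by (simp add: W_def)
  have "(\<Sum>j=1..K. exp (- eta * L n j) * (exp (- eta * cum_loss L (n - 1) j) / W))
          = ewa_potential L K eta n / W"
    using ewa_potential_step[OF step(1)] by (simp add: sum_divide_distrib)
  moreover have "exp (- eta * L n k) * (exp (- eta * cum_loss L (n - 1) k) / W)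
          = exp (- eta * cum_loss L n k) / W"
    using exp_cum_loss_step[OF step(1)] by simp
  ultimately show ?case
    using step W ewa_potential_pos[OF K, of L eta n] by (simp add: W_def)
qed

lemma ewa_nonneg: "K \<ge> 1 \<Longrightarrow> t \<ge> 1 \<Longrightarrow> ewa L K eta t k \<ge> 0"
  using ewa_potential_pos[of K L eta "t - 1"] by (simp add: ewa_eq_exp_cum_loss)

lemma sum_ewa_eq_1:
  assumes "K \<ge> 1" "t \<ge> 1"
  shows "(\<Sum>k=1..K. ewa L K eta t k) = 1"
  using ewa_potential_pos[OF assms(1), of L eta "t - 1", unfolded ewa_potential_def]
  by (simp add: ewa_eq_exp_cum_loss[OF assms] sum_divide_distrib[symmetric] ewa_potential_def)

lemma ln_ewa_potential_step_le:
  assumes K: "K \<ge> 1" and t: "t \<ge> 1" and C: "C > 0" and eta: "eta \<ge> 0"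
    and bnd: "\<And>k. k \<in> {1..K} \<Longrightarrow> 0 \<le> L t k \<and> L t k \<le> C"
  shows "ln (ewa_potential L K eta t) - ln (ewa_potential L K eta (t - 1))
           \<le> - eta * (\<Sum>k=1..K. ewa L K eta t k * L t k) + eta\<^sup>2 * C\<^sup>2 / 8"
proof -
  define W where "W = ewa_potential L K eta (t - 1)"
  have W: "W > 0" using ewa_potential_pos[OF K] by (simp add: W_def)
  have W': "ewa_potential L K eta t > 0" using ewa_potential_pos[OF K] .
  have "ewa_potential L K eta t / W = (\<Sum>k=1..K. ewa L K eta t k * exp (- eta * L t k))"
    by (simp add: ewa_potential_step[OF t] ewa_eq_exp_cum_loss[OF K t] W_def
        sum_divide_distrib mult.commute)
  also have "\<dots> \<le> exp (- eta * (\<Sum>k=1..K. ewa L K eta t k * L t k) + eta\<^sup>2 * C\<^sup>2 / 8)"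
    using ewa_nonneg[OF K t] sum_ewa_eq_1[OF K t] bnd C eta
    by (intro Hoeffdings_lemma_finite_weights) auto
  finally have "ln (ewa_potential L K eta t / W)
                  \<le> - eta * (\<Sum>k=1..K. ewa L K eta t k * L t k) + eta\<^sup>2 * C\<^sup>2 / 8"
    using W W' by (metis divide_pos_pos exp_le_cancel_iff exp_ln)
  then show ?thesis using W W' by (simp add: W_def ln_div)
qed

lemma sum_atLeastAtMost_telescope:
  fixes f :: "nat \<Rightarrow> 'a::ab_group_add"
  shows "(\<Sum>t=1..T. f t - f (t - 1)) = f T - f 0"
  by (induction T) (auto simp: sum.cl_ivl_Suc)

lemma ewa_cumulative_loss_bound:
  fixes L :: "nat \<Rightarrow> nat \<Rightarrow> real"
  assumes K: "K \<ge> 1" and C: "C > 0" and eta: "eta \<ge> 0"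
    and bnd: "\<And>t k. t \<in> {1..T} \<Longrightarrow> k \<in> {1..K} \<Longrightarrow> 0 \<le> L t k \<and> L t k \<le> C"
    and k: "k \<in> {1..K}"
  shows "eta * (\<Sum>t=1..T. \<Sum>j=1..K. ewa L K eta t j * L t j)
         \<le> eta * cum_loss L T k + ln (real K) + real T * eta\<^sup>2 * C\<^sup>2 / 8"
proof -
  let ?lnW = "\<lambda>n. ln (ewa_potential L K eta n)"
  have "- eta * cum_loss L T k \<le> ?lnW T"
  proof -
    have "exp (- eta * cum_loss L T k) \<le> ewa_potential L K eta T"
      unfolding ewa_potential_def using k by (intro member_le_sum) auto
    then show ?thesis
      using ewa_potential_pos[OF K] by (metis exp_le_cancel_iff exp_ln)
  qed
  also have "?lnW T = ?lnW 0 + (\<Sum>t=1..T. ?lnW t - ?lnW (t - 1))"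
    using sum_atLeastAtMost_telescope[of ?lnW T] by simp
  also have "\<dots> \<le> ln (real K) + (\<Sum>t=1..T. - eta * (\<Sum>j=1..K. ewa L K eta t j * L t j) + eta\<^sup>2 * C\<^sup>2 / 8)"
  proof (intro add_mono sum_mono)
    show "?lnW 0 \<le> ln (real K)"
      by (simp add: ewa_potential_0)
    fix t assume "t \<in> {1..T}"
    then show "?lnW t - ?lnW (t - 1) \<le> - eta * (\<Sum>j=1..K. ewa L K eta t j * L t j) + eta\<^sup>2 * C\<^sup>2 / 8"
      using bnd by (intro ln_ewa_potential_step_le[OF K _ C eta]) auto
  qed
  also have "\<dots> = ln (real K) - eta * (\<Sum>t=1..T. \<Sum>j=1..K. ewa L K eta t j * L t j)
                  + real T * eta\<^sup>2 * C\<^sup>2 / 8"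
    by (simp add: sum.distrib sum_distrib_left sum_negf sum_subtractf)
  finally show ?thesis by simp
qed

lemma tuned_learning_rate_bound:
  fixes a C E S :: real and T :: nat
  assumes a: "a > 0" and T: "T \<ge> 1" and C: "C > 0"
    and eta: "eta = 2 / C * sqrt (2 * a / real T)"
    and bound: "eta * E \<le> eta * S + a + real T * eta\<^sup>2 * C\<^sup>2 / 8"
  shows "(1 / real T) * E \<le> (1 / real T) * S + C * sqrt (a / (2 * real T))"
proof -
  define s where "s = sqrt (a / (2 * real T))"
  have s: "s > 0" "s\<^sup>2 = a / (2 * real T)"
    using a T by (auto simp: s_def)
  have "2 * a / real T = 2\<^sup>2 * (a / (2 * real T))"
    by (simp add: power2_eq_square)
  then have "sqrt (2 * a / real T) = 2 * s"
    unfolding s_def by (metis real_sqrt_mult real_sqrt_abs abs_numeral)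
  then have eta_s: "eta = 4 * s / C"
    by (simp add: eta)
  have "real T * eta\<^sup>2 * C\<^sup>2 / 8 = a" "eta * real T * C * s = 2 * a"
    using C T s by (simp_all add: eta_s field_simps power2_eq_square)
  then have "eta * real T * ((1 / real T) * E) \<le> eta * real T * ((1 / real T) * S + C * s)"
    using bound T by (simp add: algebra_simps)
  moreover have "eta * real T > 0"
    using s C T by (simp add: eta_s)
  ultimately show ?thesis
    unfolding s_def by (rule mult_left_le_imp_le)
qed

lemma ewa_average_loss_bound:
  fixes L :: "nat \<Rightarrow> nat \<Rightarrow> real"
  assumes K: "K \<ge> 1" and T: "T \<ge> 1" and C: "C > 0"
    and bnd: "\<And>t k. t \<in> {1..T} \<Longrightarrow> k \<in> {1..K} \<Longrightarrow> 0 \<le> L t k \<and> L t k \<le> C"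
    and k: "k \<in> {1..K}"
  defines "eta \<equiv> 2 / C * sqrt (2 * ln (real K) / real T)"
  shows "(1 / real T) * (\<Sum>t=1..T. \<Sum>j=1..K. ewa L K eta t j * L t j)
         \<le> (1 / real T) * cum_loss L T k + C * sqrt (ln (real K) / (2 * real T))"
proof (cases "K = 1")
  case True
  \<comment> \<open>Then \<open>\<eta> = 0\<close> and the potential bound is void, but the single weight is 1.\<close>
  then have "(\<Sum>j=1..K. ewa L K eta t j * L t j) = L t k" if "t \<in> {1..T}" for t
    using sum_ewa_eq_1[OF K, of t L eta] that k by simp
  then show ?thesis
    using True by (simp add: cum_loss_def)
next
  case False
  then have "ln (real K) > 0" using K by simp
  moreover from this have "eta \<ge> 0" using C by (simp add: eta_def)
  ultimately show ?thesis
    using ewa_cumulative_loss_bound[OF K C _ bnd k]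
    by (intro tuned_learning_rate_bound[OF _ T C eta_def[THEN meta_eq_to_obj_eq]])
qed

theorem theorem2:
  fixes g :: "nat \<Rightarrow> 'x \<Rightarrow> 'z"
    and H :: "('z \<Rightarrow> real) set"
    and loss :: "real \<Rightarrow> 'y \<Rightarrow> real"
    and A :: "('x \<Rightarrow> 'z) \<Rightarrow> ('x \<times> 'y) list \<Rightarrow> 'x \<Rightarrow> real"
    and xs :: "nat \<Rightarrow> nat \<Rightarrow> 'x" and ys :: "nat \<Rightarrow> nat \<Rightarrow> 'y"
    and K T m :: nat and C :: real
    and \<beta> :: "('x \<Rightarrow> 'z) \<Rightarrow> nat \<Rightarrow> real"
  assumes K: "K \<ge> 1" and T: "T \<ge> 1" and m: "m \<ge> 1" and C: "C > 0"
    and inj: "inj_on g {1..K}"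
    and H_ne: "H \<noteq> {}"
    and H_bdd: "\<And>t k. t \<in> {1..T} \<Longrightarrow> k \<in> {1..K} \<Longrightarrow>
                   bdd_below (emp loss xs ys m t (g k) ` H)"
    and bounded: "\<And>t k. t \<in> {1..T} \<Longrightarrow> k \<in> {1..K} \<Longrightarrow>
                   0 \<le> Lhat loss A xs ys m t (g k) \<and> Lhat loss A xs ys m t (g k) \<le> C"
    and regret: "\<And>t k. t \<in> {1..T} \<Longrightarrow> k \<in> {1..K} \<Longrightarrow>
                   regret loss A H xs ys m t (g k) \<le> \<beta> (g k) m"
  shows "(1 / real T) * (\<Sum>t=1..T. \<Sum>k=1..K.
            ewa (\<lambda>t k. Lhat loss A xs ys m t (g k)) K (2 / C * sqrt (2 * ln (real K) / real T)) t k
              * Lhat loss A xs ys m t (g k))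
         \<le> Min ((\<lambda>k. (1 / real T) * (\<Sum>t=1..T. best loss H xs ys m t (g k)) + \<beta> (g k) m) ` {1..K})
           + C * sqrt (ln (real K) / (2 * real T))"
proof -
  define L where "L = (\<lambda>t k. Lhat loss A xs ys m t (g k))"
  define F where "F = (\<lambda>k. (1 / real T) * (\<Sum>t=1..T. best loss H xs ys m t (g k)) + \<beta> (g k) m)"
  obtain k where k: "k \<in> {1..K}" "Min (F ` {1..K}) = F k"
    using Min_in[of "F ` {1..K}"] K by fastforce
  have "cum_loss L T k \<le> (\<Sum>t=1..T. best loss H xs ys m t (g k) + \<beta> (g k) m)"
    unfolding cum_loss_def L_def
  proof (intro sum_mono)
    fix t assume "t \<in> {1..T}"
    then show "Lhat loss A xs ys m t (g k) \<le> best loss H xs ys m t (g k) + \<beta> (g k) m"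
      using regret[OF _ k(1)] unfolding regret_def by fastforce
  qed
  then have "(1 / real T) * cum_loss L T k \<le> F k"
    using T by (simp add: F_def sum.distrib field_simps)
  with ewa_average_loss_bound[OF K T C _ k(1), of L] bounded k(2) show ?thesis
    by (simp add: L_def F_def)
qed

end
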